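(* Let $g$ be monotone increasing and satisfy hypothesis (H), let $h\ge0$, let $\phi(x+ct)$ with $c=c_*>c_\#$ be a pushed traveling front, and fix $\lambda\in(\lambda_1(c),\lambda_2(c))$. There exist constants $\gamma>0$ and $\delta>0$ such that the following holds. Let $w$ be a solution of $$w_t(t,z)=w_{zz}(t,z)-cw_z(t,z)-w(t,z)+g(w(t-h,z-ch)),\ t>0,\ z\in\mathbb{R},$$ with continuous initial datum $w(s,z)=\tilde w_0(s,z)\in[0,\kappa]$, $s\in[-h,0]$, locally Hölder in $z$ uniformly in $s$. Let $R>ch$ be such that $0\le w(t,z),\phi(z)\le\delta$ whenever $z\le-R+ch$, $t\ge-h$, and $|w(t,z)-\kappa|,|\phi(z)-\kappa|<\delta$ whenever $z\ge R-ch$, $t\ge-h$. Suppose further that $w(s,z)\le\phi(z)+\delta\eta(z)$ for all $(s,z)\in[-h,0]\times\mathbb{R}$ and $w(t,z)\le\phi(z)$ for all $(t,z)\in\mathbb{R}_+\times[-R-ch,R+ch]$. Then $w(t,z)\le\phi(z)+\delta\eta(z)e^{-\gamma t}$ for all $z\in\mathbb{R}$, $t\ge0$.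
   Context: Hypothesis (H) on $g:\mathbb{R}_+\to\mathbb{R}_+$: $g(x)=x$ has exactly two nonnegative solutions $0$ and $\kappa>0$; $g$ is $C^1$ in a $\delta_0$-neighbourhood of $0$ and of $\kappa$, with $g'(0)>1$, $g'(\kappa)<1$; $|g(u)-g(v)|\le L_g|u-v|$ for $u,v\in[0,\kappa]$; there are $C>0,\theta\in(0,1]$ with $|g'(u)-g'(0)|+|g'(\kappa)-g'(\kappa-u)|\le Cu^\theta$ for $u\in(0,\delta_0]$; $g$ is extended linearly and $C^1$-smoothly to $(-\infty,0]$ and $[\kappa,\infty)$. Characteristic function $\chi(z,c)=z^2-cz-1+g'(0)e^{-zch}$; $c_\#$ is the unique real $c$ for which $\chi(\cdot,c)$ has a positive double zero; for $c>c_\#$ its two positive simple zeros are $\lambda_1(c)<\lambda_2(c)$. A wavefront is a solution $u=\phi(x+ct)$ of $u_t=u_{xx}-u+g(u(t-h,x))$ with $\phi>0$, $\phi(-\infty)=0$, $\phi(+\infty)=\kappa$; $c_*$ is the minimal wavefront speed; the minimal wavefront is pushed if $c_*>c_\#$. $\eta(z)=\min\{e^{\lambda z},1\}$. *)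

theory Defs
  imports "HOL-Analysis.Analysis"
begin

definition C1_near :: "(real \<Rightarrow> real) \<Rightarrow> real \<Rightarrow> real \<Rightarrow> bool" where
  "C1_near g a d \<longleftrightarrow> (\<forall>x\<in>ball a d. g differentiable (at x)) \<and> continuous_on (ball a d) (deriv g)"

(* Hypothesis (H), for g already extended to the whole real line *)
definition hypH :: "(real \<Rightarrow> real) \<Rightarrow> real \<Rightarrow> bool" where
  "hypH g \<kappa> \<longleftrightarrow> \<kappa> > 0 \<and> (\<forall>x\<ge>0. g x \<ge> 0) \<and>
     {x. x \<ge> 0 \<and> g x = x} = {0, \<kappa>} \<and>
     (\<exists>\<delta>0 > 0. C1_near g 0 \<delta>0 \<and> C1_near g \<kappa> \<delta>0 \<and>
        (\<exists>C > 0. \<exists>\<theta>. 0 < \<theta> \<and> \<theta> \<le> 1 \<and>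
           (\<forall>u. 0 < u \<and> u \<le> \<delta>0 \<longrightarrow>
              \<bar>deriv g u - deriv g 0\<bar> + \<bar>deriv g \<kappa> - deriv g (\<kappa> - u)\<bar> \<le> C * u powr \<theta>))) \<and>
     deriv g 0 > 1 \<and> deriv g \<kappa> < 1 \<and>
     (\<exists>Lg. \<forall>u\<in>{0..\<kappa>}. \<forall>v\<in>{0..\<kappa>}. \<bar>g u - g v\<bar> \<le> Lg * \<bar>u - v\<bar>) \<and>
     (\<forall>x\<le>0. g x = deriv g 0 * x) \<and>
     (\<forall>x\<ge>\<kappa>. g x = \<kappa> + deriv g \<kappa> * (x - \<kappa>))"

definition chi :: "(real \<Rightarrow> real) \<Rightarrow> real \<Rightarrow> real \<Rightarrow> real \<Rightarrow> real" where
  "chi g h z c = z^2 - c * z - 1 + deriv g 0 * exp (- z * c * h)"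

definition c_sharp :: "(real \<Rightarrow> real) \<Rightarrow> real \<Rightarrow> real" where
  "c_sharp g h = (THE c. \<exists>z>0. chi g h z c = 0 \<and> deriv (\<lambda>y. chi g h y c) z = 0)"

(* the two positive zeros lambda_1(c) < lambda_2(c) for c > c_# *)
definition lambda1 :: "(real \<Rightarrow> real) \<Rightarrow> real \<Rightarrow> real \<Rightarrow> real" where
  "lambda1 g h c = Min {z. z > 0 \<and> chi g h z c = 0}"

definition lambda2 :: "(real \<Rightarrow> real) \<Rightarrow> real \<Rightarrow> real \<Rightarrow> real" where
  "lambda2 g h c = Max {z. z > 0 \<and> chi g h z c = 0}"

definition classical_sol ::
  "(real \<Rightarrow> real) \<Rightarrow> real \<Rightarrow> real \<Rightarrow> real \<Rightarrow> real set \<Rightarrow> (real \<Rightarrow> real \<Rightarrow> real) \<Rightarrow> bool" where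
  "classical_sol g h a b T u \<longleftrightarrow>
     (\<forall>t\<in>T. \<forall>x.
        (\<lambda>s. u s x) differentiable (at t) \<and>
        (\<forall>y. (\<lambda>y'. u t y') differentiable (at y)) \<and>
        deriv (\<lambda>y'. u t y') differentiable (at x) \<and>
        deriv (\<lambda>s. u s x) t =
          deriv (deriv (\<lambda>y'. u t y')) x - a * deriv (\<lambda>y'. u t y') x - u t x
          + g (u (t - h) (x - b)))"

definition wavefront :: "(real \<Rightarrow> real) \<Rightarrow> real \<Rightarrow> real \<Rightarrow> real \<Rightarrow> (real \<Rightarrow> real) \<Rightarrow> bool" where
  "wavefront g \<kappa> h c \<phi> \<longleftrightarrow> (\<forall>s. \<phi> s > 0) \<and> (\<phi> \<longlongrightarrow> 0) at_bot \<and> (\<phi> \<longlongrightarrow> \<kappa>) at_top \<and>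
     classical_sol g h 0 0 UNIV (\<lambda>t x. \<phi> (x + c * t))"

definition c_star :: "(real \<Rightarrow> real) \<Rightarrow> real \<Rightarrow> real \<Rightarrow> real" where
  "c_star g \<kappa> h = Inf {c. \<exists>\<phi>. wavefront g \<kappa> h c \<phi>}"

definition eta :: "real \<Rightarrow> real \<Rightarrow> real" where
  "eta lam z = min (exp (lam * z)) 1"

end

theory Submission
  imports Defs
begin

text \<open>
  On the half-lines \<open>z \<le> -R\<close> and \<open>z \<ge> R\<close> both \<open>w\<close> and \<open>\<phi>\<close> stay within \<open>\<delta>\<close> of the
  equilibria \<open>0\<close> and \<open>\<kappa>\<close>, where the monotone \<open>g\<close> has one-sided slope at most
  \<open>g'(0) + \<rho>\<close> resp. \<open>g'(\<kappa>) + \<rho>\<close>. Since \<open>\<chi>(\<lambda>, c) < 0\<close> and \<open>g'(\<kappa>) < 1\<close>, for \<open>\<gamma> = \<rho>\<close> small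
  the functions \<open>\<phi> + \<delta> e\<^bsup>\<lambda> z - \<gamma> t\<^esup>\<close> and \<open>\<phi> + \<delta> e\<^bsup>-\<gamma> t\<^esup>\<close> are strict supersolutions there,
  and \<open>w\<close> cannot touch them from below: at a first touching point the parabolic inequalities
  and the profile equation of \<open>\<phi>\<close> would force the delayed term to grow faster than the
  slope bound allows. On the strip \<open>\<bar>z\<bar> < R\<close> the bound holds by hypothesis.
\<close>

section \<open>Calculus at a touching point\<close>

lemma left_local_max_deriv_nonneg:
  fixes f :: "real \<Rightarrow> real"
  assumes der: "(f has_real_derivative l) (at x)"
    and max: "\<forall>\<^sub>F s in at_left x. f s \<le> f x"
  shows "0 \<le> l"
proof (rule tendsto_lowerbound)
  show "((\<lambda>s. (f s - f x) / (s - x)) \<longlongrightarrow> l) (at_left x)"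
    using der unfolding has_field_derivative_iff by (rule tendsto_mono[OF at_le, rotated]) simp
  have "\<forall>\<^sub>F s in at_left x. s < x"
    by (simp add: eventually_at_filter)
  with max show "\<forall>\<^sub>F s in at_left x. 0 \<le> (f s - f x) / (s - x)"
    by eventually_elim (auto intro: divide_nonpos_neg)
qed simp

lemma local_max_deriv2_nonpos:
  fixes f f' :: "real \<Rightarrow> real"
  assumes der: "\<And>y. (f has_real_derivative f' y) (at y)"
    and der2: "(f' has_real_derivative f2) (at x)"
    and max: "\<forall>\<^sub>F y in at x. f y \<le> f x"
  shows "f' x = 0" and "f2 \<le> 0"
proof -
  obtain r where r: "r > 0" and r_max: "\<And>y. y \<noteq> x \<Longrightarrow> dist y x < r \<Longrightarrow> f y \<le> f x"
    using max unfolding eventually_at by auto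
  show f'_x: "f' x = 0"
    by (rule DERIV_local_max[OF der r]) (metis dist_real_def abs_minus_commute order.refl r_max)
  show "f2 \<le> 0"
  proof (rule ccontr)
    assume "\<not> f2 \<le> 0"
    then obtain d where d: "d > 0" and inc: "\<And>s. 0 < s \<Longrightarrow> s < d \<Longrightarrow> f' x < f' (x + s)"
      using DERIV_pos_inc_right[OF der2] by force
    define y where "y = x + min d r / 2"
    have "x < y" using d r by (simp add: y_def)
    then obtain \<xi> where \<xi>: "x < \<xi>" "\<xi> < y" "f y - f x = (y - x) * f' \<xi>"
      using MVT2[of x y f f'] der by blast
    have "f' \<xi> > 0" using inc[of "\<xi> - x"] \<xi> f'_x d by (simp add: y_def)
    with \<xi> \<open>x < y\<close> have "f y > f x" by (smt (verit) mult_pos_pos)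
    moreover have "f y \<le> f x" using r_max[of y] d r by (simp add: y_def dist_real_def)
    ultimately show False by simp
  qed
qed

lemma touching_from_below:
  fixes u v :: "real \<Rightarrow> real \<Rightarrow> real"
  assumes u_t: "((\<lambda>s. u s z) has_real_derivative ut) (at t)"
    and v_t: "((\<lambda>s. v s z) has_real_derivative vt) (at t)"
    and u_z: "\<And>y. ((\<lambda>y. u t y) has_real_derivative u' y) (at y)"
    and v_z: "\<And>y. ((\<lambda>y. v t y) has_real_derivative v' y) (at y)"
    and u_zz: "(u' has_real_derivative u2) (at z)" and v_zz: "(v' has_real_derivative v2) (at z)"
    and touch: "u t z = v t z"
    and below_z: "\<forall>\<^sub>F y in at z. u t y \<le> v t y"
    and below_t: "\<forall>\<^sub>F s in at_left t. u s z \<le> v s z"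
  shows "vt \<le> ut" and "u' z = v' z" and "u2 \<le> v2"
proof -
  have diff_z: "((\<lambda>y. u t y - v t y) has_real_derivative u' y - v' y) (at y)" for y
    using u_z v_z by (rule DERIV_diff)
  have diff_zz: "((\<lambda>y. u' y - v' y) has_real_derivative u2 - v2) (at z)"
    using u_zz v_zz by (rule DERIV_diff)
  have max_z: "\<forall>\<^sub>F y in at z. u t y - v t y \<le> u t z - v t z"
    using below_z touch by (auto elim: eventually_mono)
  have "u' z - v' z = 0" "u2 - v2 \<le> 0"
    using local_max_deriv2_nonpos[OF diff_z diff_zz max_z] by simp_all
  moreover have "0 \<le> ut - vt"
    using DERIV_diff[OF u_t v_t] by (rule left_local_max_deriv_nonneg)
      (use below_t touch in \<open>auto elim: eventually_mono\<close>)
  ultimately show "vt \<le> ut" and "u' z = v' z" and "u2 \<le> v2" by simp_all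
qed

section \<open>First touching points\<close>

lemma first_zero_crossing:
  fixes V :: "real \<Rightarrow> 'a::t2_space \<Rightarrow> real"
  assumes S: "compact S"
    and cont: "continuous_on ({0..T} \<times> S) (\<lambda>(t, z). V t z)"
    and init: "\<forall>z\<in>S. V 0 z < 0"
    and t1: "t1 \<in> {0..T}" and z1: "z1 \<in> S" and nonneg: "V t1 z1 \<ge> 0"
  shows "\<exists>t0\<in>{0<..T}. \<exists>z0\<in>S. V t0 z0 = 0 \<and> (\<forall>t\<in>{0..<t0}. \<forall>z\<in>S. V t z < 0) \<and> (\<forall>z\<in>S. V t0 z \<le> 0)"
proof -
  define K where "K = {0..T} \<times> S"
  define N where "N = {p \<in> K. 0 \<le> (\<lambda>(t, z). V t z) p}"
  have "compact K" unfolding K_def by (intro compact_Times compact_Icc S)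
  moreover have "closed N"
    unfolding N_def using cont \<open>compact K\<close>
    by (intro continuous_on_closed_Collect_le compact_imp_closed) (auto simp: K_def)
  ultimately have "compact N"
    using compact_Int_closed[of K N] by (simp add: N_def Collect_conj_eq Int_absorb1)
  moreover have "(t1, z1) \<in> N" using t1 z1 nonneg by (simp add: N_def K_def)
  ultimately obtain t0 z0 where tz0: "(t0, z0) \<in> N" and first: "\<And>p. p \<in> N \<Longrightarrow> t0 \<le> fst p"
    using continuous_attains_inf[of N fst] continuous_on_fst[OF continuous_on_id] by fastforce
  have neg: "V t z < 0" if "t \<in> {0..<t0}" "z \<in> S" for t z
    using first[of "(t, z)"] tz0 that by (force simp: N_def K_def)
  have "t0 \<noteq> 0" using tz0 init by (auto simp: N_def K_def)
  then have t0: "t0 \<in> {0<..T}" using tz0 by (simp add: N_def K_def)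
  have nonpos: "V t0 z \<le> 0" if z: "z \<in> S" for z
  proof (rule tendsto_upperbound)
    have "continuous_on {0..t0} (\<lambda>t. V t z)"
      using continuous_on_compose2[OF cont, of "{0..t0}" "\<lambda>t. (t, z)"] z t0
      by (simp add: image_subset_iff continuous_on_Pair continuous_on_id continuous_on_const)
    then show "((\<lambda>t. V t z) \<longlongrightarrow> V t0 z) (at_left t0)"
      using t0 by (auto intro: continuous_on_Icc_at_leftD)
    have "\<forall>\<^sub>F t in at_left t0. t \<in> {0<..<t0}"
      using t0 by (intro eventually_at_left_real) simp
    then show "\<forall>\<^sub>F t in at_left t0. V t z \<le> 0"
      by eventually_elim (use neg z in \<open>fastforce intro: less_imp_le\<close>)
  qed simp
  show ?thesis
  proof (intro bexI conjI ballI)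
    have "z0 \<in> S" using tz0 by (simp add: N_def K_def)
    then show "V t0 z0 = 0" using nonpos[of z0] tz0 by (simp add: N_def)
  qed (use t0 tz0 neg nonpos in \<open>auto simp: N_def K_def\<close>)
qed

lemma first_touching_point:
  fixes V :: "real \<Rightarrow> real \<Rightarrow> real"
  assumes \<Omega>: "closed \<Omega>"
    and cont: "continuous_on ({0..} \<times> \<Omega>) (\<lambda>(t, z). V t z)"
    and init: "\<forall>z\<in>\<Omega>. V 0 z < 0"
    and boundary: "\<forall>t\<ge>0. \<forall>z\<in>frontier \<Omega>. V t z < 0"
    and far: "\<forall>t\<ge>0. \<forall>z\<in>\<Omega>. Z \<le> \<bar>z\<bar> \<longrightarrow> V t z < 0"
    and t1: "t1 \<ge> 0" and z1: "z1 \<in> \<Omega>" and nonneg: "V t1 z1 \<ge> 0"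
  shows "\<exists>t0>0. \<exists>z0\<in>interior \<Omega>. V t0 z0 = 0 \<and>
           (\<forall>t\<in>{0..<t0}. \<forall>z\<in>\<Omega>. V t z < 0) \<and> (\<forall>z\<in>\<Omega>. V t0 z \<le> 0)"
proof -
  define S where "S = \<Omega> \<inter> cball 0 Z"
  have in_S: "z \<in> S \<or> Z \<le> \<bar>z\<bar>" if "z \<in> \<Omega>" for z
    using that by (auto simp: S_def)
  have "compact S" unfolding S_def using \<Omega> by (intro closed_Int_compact) auto
  moreover have "continuous_on ({0..t1} \<times> S) (\<lambda>(t, z). V t z)"
    by (rule continuous_on_subset[OF cont]) (auto simp: S_def)
  moreover have "\<forall>z\<in>S. V 0 z < 0" using init by (simp add: S_def)
  moreover have "z1 \<in> S"
  proof (rule ccontr)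
    assume "z1 \<notin> S"
    with in_S[OF z1] far t1 z1 have "V t1 z1 < 0" by simp
    with nonneg show False by simp
  qed
  ultimately obtain t0 z0 where t0: "t0 \<in> {0<..t1}" and z0: "z0 \<in> S" "V t0 z0 = 0"
    and neg: "\<forall>t\<in>{0..<t0}. \<forall>z\<in>S. V t z < 0" and nonpos: "\<forall>z\<in>S. V t0 z \<le> 0"
    using first_zero_crossing[of S t1 V t1 z1] t1 nonneg by auto
  have "z0 \<notin> frontier \<Omega>"
  proof
    assume "z0 \<in> frontier \<Omega>"
    with boundary t0 have "V t0 z0 < 0" by simp
    with z0 show False by simp
  qed
  then have "z0 \<in> interior \<Omega>"
    using z0 \<Omega> by (simp add: S_def frontier_def closure_closed)
  moreover have "\<forall>t\<in>{0..<t0}. \<forall>z\<in>\<Omega>. V t z < 0"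
  proof (intro ballI)
    fix t z assume "t \<in> {0..<t0}" "z \<in> \<Omega>"
    then show "V t z < 0" using in_S[of z] neg far by auto
  qed
  moreover have "\<forall>z\<in>\<Omega>. V t0 z \<le> 0"
  proof
    fix z assume "z \<in> \<Omega>"
    then show "V t0 z \<le> 0" using in_S[of z] nonpos far t0 by (auto intro: less_imp_le)
  qed
  ultimately show ?thesis using t0 z0(2) by (intro exI[of _ t0] conjI bexI[of _ z0]) auto
qed

section \<open>Exponential supersolutions\<close>

text \<open>If \<open>exp_supersolution c h K \<mu> \<gamma>\<close> holds, then \<open>e\<^bsup>\<mu> z - \<gamma> t\<^esup>\<close> is a strict supersolution
  of the linear delay equation \<open>v\<^sub>t = v\<^sub>z\<^sub>z - c v\<^sub>z - v + K v(t - h, z - c h)\<close>.\<close>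

definition exp_supersolution :: "real \<Rightarrow> real \<Rightarrow> real \<Rightarrow> real \<Rightarrow> real \<Rightarrow> bool" where
  "exp_supersolution c h K \<mu> \<gamma> \<longleftrightarrow> \<gamma> + \<mu>\<^sup>2 - c * \<mu> - 1 + K * exp (\<gamma> * h) * exp (- \<mu> * c * h) < 0"

lemma exp_supersolution_eventually:
  assumes "\<mu>\<^sup>2 - c * \<mu> - 1 + K * exp (- \<mu> * c * h) < 0"
  shows "\<forall>\<^sub>F \<rho> in at_right 0. exp_supersolution c h (K + \<rho>) \<mu> \<rho>"
proof -
  let ?F = "\<lambda>\<rho>. \<rho> + \<mu>\<^sup>2 - c * \<mu> - 1 + (K + \<rho>) * exp (\<rho> * h) * exp (- \<mu> * c * h)"
  have "(?F \<longlongrightarrow> ?F 0) (at_right 0)"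
    by (intro tendsto_intros)
  moreover have "?F 0 < 0" using assms by simp
  ultimately have "\<forall>\<^sub>F \<rho> in at_right 0. ?F \<rho> < 0"
    by (rule order_tendstoD(2))
  then show ?thesis by (simp add: exp_supersolution_def)
qed

lemma quadratic_weight_bound:
  fixes K M c h z :: real
  assumes K: "K \<ge> 0" and M: "M \<ge> 2 + c\<^sup>2 + 2 * K * (1 + c\<^sup>2 * h\<^sup>2)"
  shows "1 - 2 * c * z - z\<^sup>2 + K * (1 + (z - c * h)\<^sup>2) \<le> M * (1 + z\<^sup>2)"
proof -
  have "K * (z - c * h)\<^sup>2 \<le> K * (2 * z\<^sup>2 + 2 * c\<^sup>2 * h\<^sup>2)"
    using K zero_le_power2[of "z + c * h"]
    by (intro mult_left_mono) (simp_all add: power2_eq_square algebra_simps)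
  moreover have "- 2 * c * z \<le> c\<^sup>2 + z\<^sup>2"
    using zero_le_power2[of "z + c"] by (simp add: power2_eq_square algebra_simps)
  moreover have "(2 + c\<^sup>2 + 2 * K * (1 + c\<^sup>2 * h\<^sup>2)) * (1 + z\<^sup>2) \<le> M * (1 + z\<^sup>2)"
    using M by (simp add: mult_right_mono)
  moreover have "0 \<le> 2 * z\<^sup>2 + c\<^sup>2 * z\<^sup>2 + 2 * K * (c\<^sup>2 * h\<^sup>2 * z\<^sup>2) + 1 + K"
    using K by simp
  ultimately show ?thesis by (simp add: algebra_simps)
qed

lemma exp_supersolution_margin:
  fixes c h K \<mu> \<gamma> M D X z :: real
  assumes super: "exp_supersolution c h K \<mu> \<gamma>" and K: "K \<ge> 0" and h: "h \<ge> 0"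
    and M: "M \<ge> 2 + c\<^sup>2 + 2 * K * (1 + c\<^sup>2 * h\<^sup>2)" and D: "D > 0" and X: "X > 0"
  shows "D * (\<mu>\<^sup>2 - c * \<mu> - 1) + X * (1 - 2 * c * z - z\<^sup>2)
           + K * (D * exp (\<gamma> * h) * exp (- \<mu> * c * h) + X * exp (- M * h) * (1 + (z - c * h)\<^sup>2))
         < - \<gamma> * D + M * X * (1 + z\<^sup>2)"
proof -
  have "D * (\<gamma> + \<mu>\<^sup>2 - c * \<mu> - 1 + K * exp (\<gamma> * h) * exp (- \<mu> * c * h)) < 0"
    using super D by (simp add: exp_supersolution_def mult_pos_neg)
  then have exp_part: "D * (\<mu>\<^sup>2 - c * \<mu> - 1) + K * (D * exp (\<gamma> * h) * exp (- \<mu> * c * h)) < - \<gamma> * D"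
    by (simp add: algebra_simps)
  have "M \<ge> 0" using M K by (smt (verit) zero_le_power2 mult_nonneg_nonneg)
  then have "exp (- M * h) \<le> 1" using h by (simp add: mult_nonneg_nonneg)
  then have "exp (- M * h) * (X * (1 + (z - c * h)\<^sup>2)) \<le> X * (1 + (z - c * h)\<^sup>2)"
    using X by (intro mult_left_le_one_le) auto
  then have delay_part: "K * (X * exp (- M * h) * (1 + (z - c * h)\<^sup>2)) \<le> K * (X * (1 + (z - c * h)\<^sup>2))"
    using K by (intro mult_left_mono) (simp_all add: ac_simps)
  have "X * (1 - 2 * c * z - z\<^sup>2 + K * (1 + (z - c * h)\<^sup>2)) \<le> X * (M * (1 + z\<^sup>2))"
    using quadratic_weight_bound[OF K M] X by (intro mult_left_mono) auto
  then have weight_part: "X * (1 - 2 * c * z - z\<^sup>2) + K * (X * (1 + (z - c * h)\<^sup>2)) \<le> M * X * (1 + z\<^sup>2)"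
    by (simp add: algebra_simps)
  show ?thesis
    using exp_part delay_part weight_part by (simp add: distrib_left)
qed

section \<open>The comparison principle on a closed set\<close>

definition profile_eq :: "(real \<Rightarrow> real) \<Rightarrow> real \<Rightarrow> real \<Rightarrow> (real \<Rightarrow> real) \<Rightarrow> bool" where
  "profile_eq g h c \<phi> \<longleftrightarrow> (\<forall>x. \<phi> differentiable (at x)) \<and> (\<forall>x. deriv \<phi> differentiable (at x)) \<and>
     (\<forall>x. deriv (deriv \<phi>) x - c * deriv \<phi> x - \<phi> x + g (\<phi> (x - c * h)) = 0)"

lemma wavefront_profile_eq:
  assumes "wavefront g \<kappa> h c \<phi>"
  shows "profile_eq g h c \<phi>"
proof -
  have sol: "classical_sol g h 0 0 UNIV (\<lambda>t x. \<phi> (x + c * t))"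
    using assms by (simp add: wavefront_def)
  have at_0: "(\<lambda>s. \<phi> (x + c * s)) differentiable (at 0) \<and> (\<forall>y. \<phi> differentiable (at y)) \<and>
      deriv \<phi> differentiable (at x) \<and>
      deriv (\<lambda>s. \<phi> (x + c * s)) 0 = deriv (deriv \<phi>) x - \<phi> x + g (\<phi> (x - c * h))" for x
    using sol[unfolded classical_sol_def, rule_format, of 0 x] by (simp add: algebra_simps)
  have chain: "deriv (\<lambda>s. \<phi> (x + c * s)) 0 = deriv \<phi> x * c" for x
  proof (rule DERIV_imp_deriv)
    have "(\<phi> has_real_derivative deriv \<phi> (x + c * 0)) (at (x + c * 0))"
      using at_0[of x] by (simp add: DERIV_deriv_iff_real_differentiable)
    moreover have "((\<lambda>s. x + c * s) has_real_derivative c) (at 0)"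
      by (auto intro!: derivative_eq_intros)
    ultimately show "((\<lambda>s. \<phi> (x + c * s)) has_real_derivative deriv \<phi> x * c) (at 0)"
      using DERIV_chain' by fastforce
  qed
  have "deriv (deriv \<phi>) x - c * deriv \<phi> x - \<phi> x + g (\<phi> (x - c * h)) = 0" for x
    using at_0[of x] chain[of x] by (simp add: algebra_simps)
  with at_0 show ?thesis
    unfolding profile_eq_def by blast
qed

lemma supersolution_not_touched:
  fixes w :: "real \<Rightarrow> real \<Rightarrow> real" and g \<phi> :: "real \<Rightarrow> real" and \<delta> \<mu> \<gamma> \<epsilon> M :: real
  defines "\<psi> \<equiv> \<lambda>s y. \<phi> y + \<delta> * exp (\<mu> * y) * exp (- \<gamma> * s) + \<epsilon> * exp (M * s) * (1 + y\<^sup>2)"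
  assumes sol: "classical_sol g h c (c * h) {t} w"
    and \<phi>: "profile_eq g h c \<phi>"
    and super: "exp_supersolution c h K \<mu> \<gamma>" and K: "K \<ge> 0" and h: "h \<ge> 0"
    and M: "M \<ge> 2 + c\<^sup>2 + 2 * K * (1 + c\<^sup>2 * h\<^sup>2)" and \<delta>: "\<delta> > 0" and \<epsilon>: "\<epsilon> > 0"
    and touch: "w t z = \<psi> t z"
    and below_z: "\<forall>\<^sub>F y in at z. w t y \<le> \<psi> t y"
    and below_t: "\<forall>\<^sub>F s in at_left t. w s z \<le> \<psi> s z"
  shows "K * (\<psi> (t - h) (z - c * h) - \<phi> (z - c * h)) < g (w (t - h) (z - c * h)) - g (\<phi> (z - c * h))"
proof (rule ccontr)
  assume delay: "\<not> ?thesis"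
  define wz where "wz = deriv (\<lambda>y. w t y)"
  have pde: "deriv (\<lambda>s. w s z) t = deriv wz z - c * wz z - w t z + g (w (t - h) (z - c * h))"
    using sol unfolding classical_sol_def wz_def by auto
  have "(\<lambda>s. w s z) differentiable (at t)" "\<And>y. (\<lambda>y. w t y) differentiable (at y)"
    "wz differentiable (at z)"
    using sol unfolding classical_sol_def wz_def by auto
  then have w_t: "((\<lambda>s. w s z) has_real_derivative deriv (\<lambda>s. w s z) t) (at t)"
    and w_z: "\<And>y. ((\<lambda>y. w t y) has_real_derivative wz y) (at y)"
    and w_zz: "(wz has_real_derivative deriv wz z) (at z)"
    by (simp_all add: wz_def DERIV_deriv_iff_real_differentiable)
  have \<phi>_z: "(\<phi> has_real_derivative deriv \<phi> y) (at y)" for y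
    using \<phi> by (simp add: profile_eq_def DERIV_deriv_iff_real_differentiable)
  have \<phi>_zz: "(deriv \<phi> has_real_derivative deriv (deriv \<phi>) z) (at z)"
    using \<phi> by (simp add: profile_eq_def DERIV_deriv_iff_real_differentiable)
  have \<phi>_eq: "g (\<phi> (z - c * h)) = c * deriv \<phi> z + \<phi> z - deriv (deriv \<phi>) z"
    using \<phi> by (simp add: profile_eq_def algebra_simps)
  define E where "E = exp (\<mu> * z) * exp (- \<gamma> * t)"
  define X where "X = exp (M * t)"
  define \<psi>' where "\<psi>' = (\<lambda>y. deriv \<phi> y + \<delta> * (\<mu> * exp (\<mu> * y)) * exp (- \<gamma> * t) + \<epsilon> * X * (2 * y))"
  have \<psi>_t: "((\<lambda>s. \<psi> s z) has_real_derivative - \<gamma> * \<delta> * E + M * \<epsilon> * X * (1 + z\<^sup>2)) (at t)"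
    unfolding \<psi>_def E_def X_def by (rule derivative_eq_intros refl | simp add: algebra_simps)+
  have \<psi>_z: "((\<lambda>y. \<psi> t y) has_real_derivative \<psi>' y) (at y)" for y
    unfolding \<psi>_def \<psi>'_def X_def by (rule derivative_eq_intros \<phi>_z refl | simp)+
  have \<psi>_zz: "(\<psi>' has_real_derivative deriv (deriv \<phi>) z + \<delta> * \<mu>\<^sup>2 * E + \<epsilon> * X * 2) (at z)"
    unfolding \<psi>'_def E_def by (rule derivative_eq_intros \<phi>_zz refl | simp add: power2_eq_square)+
  have wt_ge: "- \<gamma> * \<delta> * E + M * \<epsilon> * X * (1 + z\<^sup>2) \<le> deriv (\<lambda>s. w s z) t"
    and wz_eq: "wz z = deriv \<phi> z + \<delta> * \<mu> * E + 2 * \<epsilon> * X * z"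
    and wzz_le: "deriv wz z \<le> deriv (deriv \<phi>) z + \<delta> * \<mu>\<^sup>2 * E + 2 * \<epsilon> * X"
    using touching_from_below[OF w_t \<psi>_t w_z \<psi>_z w_zz \<psi>_zz touch below_z below_t]
    by (auto simp: \<psi>'_def E_def algebra_simps)
  have w_tz: "w t z = \<phi> z + \<delta> * E + \<epsilon> * X * (1 + z\<^sup>2)"
    using touch by (simp add: \<psi>_def E_def X_def)
  have "\<psi> (t - h) (z - c * h) - \<phi> (z - c * h)
      = \<delta> * E * exp (\<gamma> * h) * exp (- \<mu> * c * h) + \<epsilon> * X * exp (- M * h) * (1 + (z - c * h)\<^sup>2)"
    by (simp add: \<psi>_def E_def X_def mult_exp_exp algebra_simps)
  with delay have "g (w (t - h) (z - c * h)) \<le> g (\<phi> (z - c * h))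
      + K * (\<delta> * E * exp (\<gamma> * h) * exp (- \<mu> * c * h) + \<epsilon> * X * exp (- M * h) * (1 + (z - c * h)\<^sup>2))"
    by simp
  with pde wz_eq wzz_le wt_ge w_tz \<phi>_eq
  have "- \<gamma> * (\<delta> * E) + M * (\<epsilon> * X) * (1 + z\<^sup>2) \<le> \<delta> * E * (\<mu>\<^sup>2 - c * \<mu> - 1) + \<epsilon> * X * (1 - 2 * c * z - z\<^sup>2)
      + K * (\<delta> * E * exp (\<gamma> * h) * exp (- \<mu> * c * h) + \<epsilon> * X * exp (- M * h) * (1 + (z - c * h)\<^sup>2))"
    by (simp add: algebra_simps power2_eq_square)
  moreover have "\<delta> * E > 0" "\<epsilon> * X > 0" using \<delta> \<epsilon> by (simp_all add: E_def X_def)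
  ultimately show False
    using exp_supersolution_margin[OF super K h M, of "\<delta> * E" "\<epsilon> * X" z] by (simp add: mult.assoc)
qed

lemma quadratic_margin_dominates:
  fixes B \<epsilon> M s y :: real
  assumes \<epsilon>: "\<epsilon> > 0" and M: "M \<ge> 0" and s: "s \<ge> 0" and y: "sqrt (\<bar>B\<bar> / \<epsilon>) \<le> \<bar>y\<bar>"
  shows "B < \<epsilon> * exp (M * s) * (1 + y\<^sup>2)"
proof -
  have "\<bar>B\<bar> / \<epsilon> \<le> y\<^sup>2"
    using power_mono[OF y, of 2] \<epsilon> by simp
  then have "B < \<epsilon> * (1 + y\<^sup>2)" using \<epsilon> by (simp add: field_simps)
  also have "\<epsilon> * (1 + y\<^sup>2) \<le> \<epsilon> * exp (M * s) * (1 + y\<^sup>2)"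
    using \<epsilon> M s by (simp add: mult_right_mono)
  finally show ?thesis .
qed

lemma no_first_touching:
  fixes w :: "real \<Rightarrow> real \<Rightarrow> real" and g \<phi> :: "real \<Rightarrow> real" and \<Omega> :: "real set"
    and \<delta> \<mu> \<gamma> \<epsilon> M :: real
  defines "\<psi> \<equiv> \<lambda>s y. \<phi> y + \<delta> * exp (\<mu> * y) * exp (- \<gamma> * s) + \<epsilon> * exp (M * s) * (1 + y\<^sup>2)"
  assumes sol: "classical_sol g h c (c * h) {0<..} w"
    and \<phi>: "profile_eq g h c \<phi>"
    and super: "exp_supersolution c h K \<mu> \<gamma>" and \<gamma>: "\<gamma> \<ge> 0" and K: "K \<ge> 0" and h: "h \<ge> 0"
    and M: "M \<ge> 2 + c\<^sup>2 + 2 * K * (1 + c\<^sup>2 * h\<^sup>2)" and \<delta>: "\<delta> > 0" and \<epsilon>: "\<epsilon> > 0"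
    and init: "\<And>s z. s \<in> {-h..0} \<Longrightarrow> w s z \<le> \<phi> z + \<delta> * exp (\<mu> * z)"
    and outside: "\<And>t z. t \<ge> 0 \<Longrightarrow> z \<in> \<Omega> \<Longrightarrow> z - c * h \<notin> \<Omega> \<Longrightarrow> w t (z - c * h) \<le> \<phi> (z - c * h)"
    and slope: "\<And>t z. t \<ge> -h \<Longrightarrow> z \<in> \<Omega> \<Longrightarrow>
      g (w t (z - c * h)) - g (\<phi> (z - c * h)) \<le> K * max (w t (z - c * h) - \<phi> (z - c * h)) 0"
    and t0: "t0 > 0" and z0: "z0 \<in> interior \<Omega>"
    and below: "\<And>s y. s \<in> {0..t0} \<Longrightarrow> y \<in> \<Omega> \<Longrightarrow> w s y \<le> \<psi> s y"
    and touch: "w t0 z0 = \<psi> t0 z0"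
  shows False
proof -
  have "z0 \<in> \<Omega>" using z0 interior_subset by blast
  have \<phi>_le_\<psi>: "\<phi> y \<le> \<psi> s y" for s y
    using \<delta> \<epsilon> by (simp add: \<psi>_def add_nonneg_nonneg)
  have "K * (\<psi> (t0 - h) (z0 - c * h) - \<phi> (z0 - c * h)) < g (w (t0 - h) (z0 - c * h)) - g (\<phi> (z0 - c * h))"
    unfolding \<psi>_def
  proof (rule supersolution_not_touched[OF _ \<phi> super K h M \<delta> \<epsilon>])
    show "classical_sol g h c (c * h) {t0} w"
      using sol t0 by (simp add: classical_sol_def)
    show "w t0 z0 = \<phi> z0 + \<delta> * exp (\<mu> * z0) * exp (- \<gamma> * t0) + \<epsilon> * exp (M * t0) * (1 + z0\<^sup>2)"
      using touch by (simp add: \<psi>_def)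
    show "\<forall>\<^sub>F y in at z0. w t0 y \<le> \<phi> y + \<delta> * exp (\<mu> * y) * exp (- \<gamma> * t0) + \<epsilon> * exp (M * t0) * (1 + y\<^sup>2)"
      using eventually_at_in_open'[OF open_interior z0]
      by eventually_elim (use below[of t0] t0 interior_subset in \<open>auto simp: \<psi>_def\<close>)
    have "\<forall>\<^sub>F s in at_left t0. s \<in> {0<..<t0}"
      using t0 by (intro eventually_at_left_real) simp
    then show "\<forall>\<^sub>F s in at_left t0. w s z0 \<le> \<phi> z0 + \<delta> * exp (\<mu> * z0) * exp (- \<gamma> * s) + \<epsilon> * exp (M * s) * (1 + z0\<^sup>2)"
      by eventually_elim (use below \<open>z0 \<in> \<Omega>\<close> in \<open>auto simp: \<psi>_def\<close>)
  qed
  moreover have "w (t0 - h) (z0 - c * h) \<le> \<psi> (t0 - h) (z0 - c * h)"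
  proof (cases "t0 - h < 0")
    case True
    then have "1 \<le> exp (- \<gamma> * (t0 - h))" using \<gamma> by (simp add: mult_nonneg_nonpos)
    then have "\<delta> * exp (\<mu> * (z0 - c * h)) * 1 \<le> \<delta> * exp (\<mu> * (z0 - c * h)) * exp (- \<gamma> * (t0 - h))"
      using \<delta> by (intro mult_left_mono) auto
    moreover have "w (t0 - h) (z0 - c * h) \<le> \<phi> (z0 - c * h) + \<delta> * exp (\<mu> * (z0 - c * h))"
      using True t0 by (intro init) simp
    moreover have "0 \<le> \<epsilon> * exp (M * (t0 - h)) * (1 + (z0 - c * h)\<^sup>2)"
      using \<epsilon> by simp
    ultimately show ?thesis unfolding \<psi>_def by linarith
  next
    case False
    then show ?thesis
      using below[of "t0 - h" "z0 - c * h"] outside[of "t0 - h" z0] \<phi>_le_\<psi>[of "z0 - c * h" "t0 - h"]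
        \<open>z0 \<in> \<Omega>\<close> h by (cases "z0 - c * h \<in> \<Omega>") auto
  qed
  ultimately show False
    using slope[of "t0 - h" z0] t0 \<open>z0 \<in> \<Omega>\<close> K \<phi>_le_\<psi>[of "z0 - c * h" "t0 - h"]
      mult_left_mono[of "max (w (t0 - h) (z0 - c * h) - \<phi> (z0 - c * h)) 0"
        "\<psi> (t0 - h) (z0 - c * h) - \<phi> (z0 - c * h)" K]
    by simp
qed

text \<open>The penalty \<open>\<epsilon> e\<^bsup>M t\<^esup> (1 + z\<^sup>2)\<close> makes \<open>w\<close> lie strictly below the comparison function for
  large \<open>\<bar>z\<bar>\<close>, so that a first touching point exists; the choice of \<open>M\<close> in
  \<open>exp_supersolution_margin\<close> keeps the penalised function a strict supersolution.\<close>

lemma comparison_with_margin: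
  fixes w :: "real \<Rightarrow> real \<Rightarrow> real" and g \<phi> :: "real \<Rightarrow> real" and \<Omega> :: "real set"
  assumes sol: "classical_sol g h c (c * h) {0<..} w"
    and cont: "continuous_on ({0..} \<times> UNIV) (\<lambda>(t, z). w t z)"
    and bdd: "\<And>t z. t \<ge> 0 \<Longrightarrow> w t z - \<phi> z \<le> B"
    and \<phi>: "profile_eq g h c \<phi>"
    and super: "exp_supersolution c h K \<mu> \<gamma>" and \<gamma>: "\<gamma> \<ge> 0" and K: "K \<ge> 0" and h: "h \<ge> 0"
    and M: "M \<ge> 2 + c\<^sup>2 + 2 * K * (1 + c\<^sup>2 * h\<^sup>2)" and \<delta>: "\<delta> > 0" and \<epsilon>: "\<epsilon> > 0"
    and \<Omega>: "closed \<Omega>"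
    and boundary: "\<And>t z. t \<ge> 0 \<Longrightarrow> z \<in> frontier \<Omega> \<Longrightarrow> w t z \<le> \<phi> z"
    and init: "\<And>s z. s \<in> {-h..0} \<Longrightarrow> w s z \<le> \<phi> z + \<delta> * exp (\<mu> * z)"
    and outside: "\<And>t z. t \<ge> 0 \<Longrightarrow> z \<in> \<Omega> \<Longrightarrow> z - c * h \<notin> \<Omega> \<Longrightarrow> w t (z - c * h) \<le> \<phi> (z - c * h)"
    and slope: "\<And>t z. t \<ge> -h \<Longrightarrow> z \<in> \<Omega> \<Longrightarrow>
      g (w t (z - c * h)) - g (\<phi> (z - c * h)) \<le> K * max (w t (z - c * h) - \<phi> (z - c * h)) 0"
    and t: "t \<ge> 0" and z: "z \<in> \<Omega>"
  shows "w t z \<le> \<phi> z + \<delta> * exp (\<mu> * z) * exp (- \<gamma> * t) + \<epsilon> * exp (M * t) * (1 + z\<^sup>2)"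
proof (rule ccontr)
  define \<psi> where "\<psi> = (\<lambda>s y. \<phi> y + \<delta> * exp (\<mu> * y) * exp (- \<gamma> * s) + \<epsilon> * exp (M * s) * (1 + y\<^sup>2))"
  define V where "V = (\<lambda>s y. w s y - \<psi> s y)"
  assume "\<not> ?thesis"
  then have "V t z \<ge> 0" by (simp add: V_def \<psi>_def)
  have margin_pos: "0 < \<delta> * exp (\<mu> * y) * exp (- \<gamma> * s) + \<epsilon> * exp (M * s) * (1 + y\<^sup>2)" for s y
    using \<delta> \<epsilon> by (simp add: add_pos_pos add_pos_nonneg)
  have "continuous_on UNIV \<phi>"
    using \<phi> by (auto simp: profile_eq_def intro!: differentiable_imp_continuous_on differentiable_at_imp_differentiable_on)
  moreover have "continuous_on ({0..} \<times> \<Omega>) (\<lambda>(s, y). w s y)"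
    by (rule continuous_on_subset[OF cont]) auto
  ultimately have "continuous_on ({0..} \<times> \<Omega>) (\<lambda>(s, y). V s y)"
    unfolding V_def \<psi>_def
    by (auto simp: case_prod_unfold intro!: continuous_intros continuous_on_compose2[of UNIV \<phi>])
  moreover have "\<forall>y\<in>\<Omega>. V 0 y < 0"
  proof
    fix y
    have "0 < \<epsilon> * (1 + y\<^sup>2)" using \<epsilon> by (simp add: add_pos_nonneg)
    then show "V 0 y < 0" using init[of 0 y] h by (simp add: V_def \<psi>_def)
  qed
  moreover have "\<forall>s\<ge>0. \<forall>y\<in>frontier \<Omega>. V s y < 0"
  proof (intro allI impI ballI)
    fix s y :: real assume "s \<ge> 0" "y \<in> frontier \<Omega>"
    then show "V s y < 0" using boundary[of s y] margin_pos[of y s] by (simp add: V_def \<psi>_def)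
  qed
  moreover have "\<forall>s\<ge>0. \<forall>y\<in>\<Omega>. sqrt (\<bar>B\<bar> / \<epsilon>) \<le> \<bar>y\<bar> \<longrightarrow> V s y < 0"
  proof (intro allI impI ballI)
    fix s y :: real assume s: "s \<ge> 0" and y: "sqrt (\<bar>B\<bar> / \<epsilon>) \<le> \<bar>y\<bar>"
    have "0 \<le> M" using M K by (smt (verit) zero_le_power2 mult_nonneg_nonneg)
    then have "B < \<epsilon> * exp (M * s) * (1 + y\<^sup>2)"
      using quadratic_margin_dominates[OF \<epsilon> _ s y] by simp
    moreover have "0 < \<delta> * exp (\<mu> * y) * exp (- \<gamma> * s)" using \<delta> by simp
    ultimately show "V s y < 0"
      using bdd[OF s, of y] by (simp add: V_def \<psi>_def)
  qed
  ultimately obtain t0 z0 where t0: "t0 > 0" and z0: "z0 \<in> interior \<Omega>" "V t0 z0 = 0"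
    and before: "\<forall>s\<in>{0..<t0}. \<forall>y\<in>\<Omega>. V s y < 0" and at_t0: "\<forall>y\<in>\<Omega>. V t0 y \<le> 0"
    using first_touching_point[OF \<Omega>] t z \<open>V t z \<ge> 0\<close> by blast
  have "w s y \<le> \<psi> s y" if "s \<in> {0..t0}" "y \<in> \<Omega>" for s y
    using that before at_t0 by (cases "s = t0") (auto simp: V_def less_imp_le)
  then show False
    using no_first_touching[OF sol \<phi> super \<gamma> K h M \<delta> \<epsilon> init outside slope t0 z0(1)] z0(2)
    by (simp add: V_def \<psi>_def)
qed

lemma comparison_on_closed_set:
  fixes w :: "real \<Rightarrow> real \<Rightarrow> real" and g \<phi> :: "real \<Rightarrow> real" and \<Omega> :: "real set"
  assumes sol: "classical_sol g h c (c * h) {0<..} w"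
    and cont: "continuous_on ({0..} \<times> UNIV) (\<lambda>(t, z). w t z)"
    and bdd: "\<And>t z. t \<ge> 0 \<Longrightarrow> w t z - \<phi> z \<le> B"
    and \<phi>: "profile_eq g h c \<phi>"
    and super: "exp_supersolution c h K \<mu> \<gamma>" and \<gamma>: "\<gamma> \<ge> 0" and K: "K \<ge> 0" and h: "h \<ge> 0"
    and \<delta>: "\<delta> > 0" and \<Omega>: "closed \<Omega>"
    and boundary: "\<And>t z. t \<ge> 0 \<Longrightarrow> z \<in> frontier \<Omega> \<Longrightarrow> w t z \<le> \<phi> z"
    and init: "\<And>s z. s \<in> {-h..0} \<Longrightarrow> w s z \<le> \<phi> z + \<delta> * exp (\<mu> * z)"
    and outside: "\<And>t z. t \<ge> 0 \<Longrightarrow> z \<in> \<Omega> \<Longrightarrow> z - c * h \<notin> \<Omega> \<Longrightarrow> w t (z - c * h) \<le> \<phi> (z - c * h)"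
    and slope: "\<And>t z. t \<ge> -h \<Longrightarrow> z \<in> \<Omega> \<Longrightarrow>
      g (w t (z - c * h)) - g (\<phi> (z - c * h)) \<le> K * max (w t (z - c * h) - \<phi> (z - c * h)) 0"
    and t: "t \<ge> 0" and z: "z \<in> \<Omega>"
  shows "w t z \<le> \<phi> z + \<delta> * exp (\<mu> * z) * exp (- \<gamma> * t)"
proof (rule field_le_epsilon)
  fix e :: real assume e: "e > 0"
  define M where "M = 2 + c\<^sup>2 + 2 * K * (1 + c\<^sup>2 * h\<^sup>2)"
  have z2: "1 + z\<^sup>2 > 0" by (simp add: add_pos_nonneg)
  then have X: "exp (M * t) * (1 + z\<^sup>2) > 0" by simp
  have "w t z \<le> \<phi> z + \<delta> * exp (\<mu> * z) * exp (- \<gamma> * t) + e / (exp (M * t) * (1 + z\<^sup>2)) * exp (M * t) * (1 + z\<^sup>2)"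
    using e X
    by (intro comparison_with_margin[OF sol cont bdd \<phi> super \<gamma> K h _ \<delta> _ \<Omega> boundary init outside slope t z])
      (simp_all add: M_def)
  with z2 show "w t z \<le> \<phi> z + \<delta> * exp (\<mu> * z) * exp (- \<gamma> * t) + e" by simp
qed

section \<open>Consequences of hypothesis (H)\<close>

lemma increment_le_slope:
  fixes g :: "real \<Rightarrow> real"
  assumes I: "is_interval I" and mono: "mono_on I g"
    and der: "\<And>x. x \<in> I \<Longrightarrow> (g has_real_derivative deriv g x) (at x)"
    and bound: "\<And>x. x \<in> I \<Longrightarrow> deriv g x \<le> K"
    and a: "a \<in> I" and p: "p \<in> I"
  shows "g a - g p \<le> K * max (a - p) 0"
proof (cases "a \<le> p")
  case True
  then show ?thesis using mono_onD[OF mono a p] by simp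
next
  case False
  have between: "x \<in> I" if "p \<le> x" "x \<le> a" for x
    using mem_is_interval_1_I[OF I p a] that by blast
  then obtain \<xi> where \<xi>: "p < \<xi>" "\<xi> < a" "g a - g p = (a - p) * deriv g \<xi>"
    using MVT2[of p a g "deriv g"] der False by force
  have "(a - p) * deriv g \<xi> \<le> (a - p) * K"
    using bound[of \<xi>] between[of \<xi>] \<xi> False by (intro mult_left_mono) auto
  with \<xi> False show ?thesis by (simp add: mult.commute)
qed

lemma hypH_deriv_beyond_kappa:
  assumes H: "hypH g \<kappa>" and x: "x > \<kappa>"
  shows "deriv g x = deriv g \<kappa>"
proof (rule DERIV_imp_deriv)
  have "((\<lambda>y. \<kappa> + deriv g \<kappa> * (y - \<kappa>)) has_real_derivative deriv g \<kappa>) (at x)"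
    by (auto intro!: derivative_eq_intros)
  then show "(g has_real_derivative deriv g \<kappa>) (at x)"
    using H x unfolding hypH_def
    by (elim conjE has_field_derivative_transform_within_open[where S = "{\<kappa><..}"]) auto
qed

lemma hypH_deriv_kappa_nonneg:
  assumes H: "hypH g \<kappa>" and mono: "mono_on {0..} g"
  shows "deriv g \<kappa> \<ge> 0"
proof -
  have lin: "g x = \<kappa> + deriv g \<kappa> * (x - \<kappa>)" if "x \<ge> \<kappa>" for x
    using H that by (simp add: hypH_def)
  have "g \<kappa> \<le> g (\<kappa> + 1)"
    using H by (intro mono_onD[OF mono]) (auto simp: hypH_def)
  then show ?thesis using lin[of \<kappa>] lin[of "\<kappa> + 1"] by simp
qed

lemma hypH_small_scale:
  assumes H: "hypH g \<kappa>" and e: "e > 0"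
  obtains \<delta> where "0 < \<delta>" "\<delta> < \<kappa>"
    and "\<And>x. \<bar>x\<bar> \<le> \<delta> \<or> \<bar>x - \<kappa>\<bar> \<le> \<delta> \<Longrightarrow> (g has_real_derivative deriv g x) (at x)"
    and "\<And>u. 0 < u \<Longrightarrow> u \<le> \<delta> \<Longrightarrow> \<bar>deriv g u - deriv g 0\<bar> \<le> e \<and> \<bar>deriv g \<kappa> - deriv g (\<kappa> - u)\<bar> \<le> e"
proof -
  obtain \<delta>0 C \<theta> where \<delta>0: "\<delta>0 > 0" and C1_0: "C1_near g 0 \<delta>0" and C1_\<kappa>: "C1_near g \<kappa> \<delta>0"
    and C: "C > 0" and \<theta>: "\<theta> > 0"
    and holder: "\<And>u. 0 < u \<Longrightarrow> u \<le> \<delta>0 \<Longrightarrow>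
      \<bar>deriv g u - deriv g 0\<bar> + \<bar>deriv g \<kappa> - deriv g (\<kappa> - u)\<bar> \<le> C * u powr \<theta>"
  proof -
    have "\<exists>\<delta>0 > 0. C1_near g 0 \<delta>0 \<and> C1_near g \<kappa> \<delta>0 \<and>
        (\<exists>C > 0. \<exists>\<theta>. 0 < \<theta> \<and> \<theta> \<le> 1 \<and>
           (\<forall>u. 0 < u \<and> u \<le> \<delta>0 \<longrightarrow>
              \<bar>deriv g u - deriv g 0\<bar> + \<bar>deriv g \<kappa> - deriv g (\<kappa> - u)\<bar> \<le> C * u powr \<theta>))"
      using H unfolding hypH_def by (elim conjE)
    with that show ?thesis by auto
  qed
  have \<kappa>: "\<kappa> > 0" using H by (simp add: hypH_def)
  have "((\<lambda>u. C * u powr \<theta>) \<longlongrightarrow> C * 0) (at_right 0)"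
    by (intro tendsto_intros tendsto_zero_powrI[OF tendsto_ident_at tendsto_const]
        eventually_mono[OF eventually_at_right_less]) (use \<theta> in auto)
  then have "\<forall>\<^sub>F u in at_right 0. C * u powr \<theta> < e"
    using e by (auto dest: order_tendstoD(2))
  moreover have "\<forall>\<^sub>F u in at_right 0. u < min \<delta>0 \<kappa>"
    using \<delta>0 \<kappa> by (intro order_tendstoD(2)[OF tendsto_ident_at]) auto
  ultimately have "\<forall>\<^sub>F u in at_right 0. 0 < u \<and> u < min \<delta>0 \<kappa> \<and> C * u powr \<theta> < e"
    by (intro eventually_conj eventually_at_right_less)
  then obtain \<delta> where \<delta>: "0 < \<delta>" "\<delta> < \<delta>0" "\<delta> < \<kappa>" and C\<delta>: "C * \<delta> powr \<theta> < e"
    using eventually_happens'[of "at_right (0::real)"] by auto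
  show ?thesis
  proof (rule that[OF \<delta>(1,3)])
    fix x :: real assume "\<bar>x\<bar> \<le> \<delta> \<or> \<bar>x - \<kappa>\<bar> \<le> \<delta>"
    then show "(g has_real_derivative deriv g x) (at x)"
      using C1_0 C1_\<kappa> \<delta> unfolding C1_near_def
      by (auto simp: DERIV_deriv_iff_real_differentiable dist_real_def abs_minus_commute)
  next
    fix u :: real assume u: "0 < u" "u \<le> \<delta>"
    then have "C * u powr \<theta> \<le> C * \<delta> powr \<theta>"
      using \<theta> C by (simp add: powr_mono2)
    then show "\<bar>deriv g u - deriv g 0\<bar> \<le> e \<and> \<bar>deriv g \<kappa> - deriv g (\<kappa> - u)\<bar> \<le> e"
      using holder[of u] u \<delta> C\<delta> by linarith
  qed
qed

lemma hypH_local_slopes: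
  assumes H: "hypH g \<kappa>" and mono: "mono_on {0..} g" and e: "e > 0"
  obtains \<delta> where "\<delta> > 0"
    and "\<forall>a\<in>{0..\<delta>}. \<forall>p\<in>{0..\<delta>}. g a - g p \<le> (deriv g 0 + e) * max (a - p) 0"
    and "\<forall>a\<in>{\<kappa> - \<delta><..<\<kappa> + \<delta>}. \<forall>p\<in>{\<kappa> - \<delta><..<\<kappa> + \<delta>}.
           g a - g p \<le> (deriv g \<kappa> + e) * max (a - p) 0"
proof -
  obtain \<delta> where \<delta>: "0 < \<delta>" "\<delta> < \<kappa>"
    and diff: "\<And>x. \<bar>x\<bar> \<le> \<delta> \<or> \<bar>x - \<kappa>\<bar> \<le> \<delta> \<Longrightarrow> (g has_real_derivative deriv g x) (at x)"
    and small: "\<And>u. 0 < u \<Longrightarrow> u \<le> \<delta> \<Longrightarrow> \<bar>deriv g u - deriv g 0\<bar> \<le> e \<and> \<bar>deriv g \<kappa> - deriv g (\<kappa> - u)\<bar> \<le> e"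
    using hypH_small_scale[OF H e] by blast
  show ?thesis
  proof (rule that[OF \<delta>(1)]; intro ballI)
    fix a p assume "a \<in> {0..\<delta>}" "p \<in> {0..\<delta>}"
    then show "g a - g p \<le> (deriv g 0 + e) * max (a - p) 0"
    proof (rule increment_le_slope[rotated 4])
      fix x assume x: "x \<in> {0..\<delta>}"
      show "(g has_real_derivative deriv g x) (at x)" using x by (intro diff) auto
      show "deriv g x \<le> deriv g 0 + e"
        using small[of x] x e by (cases "x = 0") auto
    qed (auto intro: mono_on_subset[OF mono])
  next
    fix a p assume "a \<in> {\<kappa> - \<delta><..<\<kappa> + \<delta>}" "p \<in> {\<kappa> - \<delta><..<\<kappa> + \<delta>}"
    then show "g a - g p \<le> (deriv g \<kappa> + e) * max (a - p) 0"
    proof (rule increment_le_slope[rotated 4])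
      fix x assume x: "x \<in> {\<kappa> - \<delta><..<\<kappa> + \<delta>}"
      show "(g has_real_derivative deriv g x) (at x)" using x by (intro diff) auto
      show "deriv g x \<le> deriv g \<kappa> + e"
        using small[of "\<kappa> - x"] x e hypH_deriv_beyond_kappa[OF H, of x]
        by (cases x \<kappa> rule: linorder_cases) auto
    qed (use \<delta> in \<open>auto intro: mono_on_subset[OF mono]\<close>)
  qed
qed

section \<open>The characteristic function\<close>

text \<open>\<open>Min\<close> and \<open>Max\<close> of an empty or infinite set are the same unspecified value, so
  \<open>lambda1 < lambda2\<close> forces the set of positive zeros of \<open>\<chi>\<close> to be finite and nonempty.\<close>

lemma Min_eq_Max_degenerate:
  fixes S :: "real set"
  assumes "\<not> (finite S \<and> S \<noteq> {})"
  shows "Min S = Max S"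
proof (cases "finite S")
  case True
  then have "S = {}" using assms by simp
  then show ?thesis by (simp add: Min.eq_fold' Max.eq_fold')
next
  case False
  then show ?thesis by (simp add: Min.infinite Max.infinite)
qed

lemma chi_neg_between_zeros:
  assumes l1: "lambda1 g h c < lam" and l2: "lam < lambda2 g h c" and d0: "deriv g 0 > 0"
  shows "lam > 0" and "chi g h lam c < 0"
proof -
  define S where "S = {z. z > 0 \<and> chi g h z c = 0}"
  have "finite S" "S \<noteq> {}"
    using Min_eq_Max_degenerate[of S] l1 l2 unfolding lambda1_def lambda2_def S_def[symmetric]
    by (metis order.strict_trans order.irrefl)+
  then have aS: "Min S \<in> S" and bS: "Max S \<in> S" by simp_all
  define a b where "a = Min S" and "b = Max S"
  have al: "a < lam" and lb: "lam < b"
    using l1 l2 by (simp_all add: lambda1_def lambda2_def S_def a_def b_def)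
  then show "lam > 0" using aS by (simp add: S_def a_def)
  define s where "s = (lam - a) / (b - a)"
  have s: "0 < s" "s < 1" using al lb by (auto simp: s_def field_simps)
  have "s * (b - a) = lam - a" using al lb by (simp add: s_def)
  then have lam_eq: "lam = (1 - s) * a + s * b" by (simp add: algebra_simps)
  have "exp (- lam * c * h) \<le> (1 - s) * exp (- a * c * h) + s * exp (- b * c * h)"
    using convex_onD[OF exp_convex, of s "- a * c * h" "- b * c * h"] s
    by (simp add: lam_eq algebra_simps)
  then have "deriv g 0 * exp (- lam * c * h)
      \<le> deriv g 0 * ((1 - s) * exp (- a * c * h) + s * exp (- b * c * h))"
    using d0 by (simp add: mult_left_mono)
  moreover have "lam\<^sup>2 < (1 - s) * a\<^sup>2 + s * b\<^sup>2"
  proof -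
    have "(1 - s) * a\<^sup>2 + s * b\<^sup>2 - lam\<^sup>2 = s * (1 - s) * (b - a)\<^sup>2"
      by (simp add: lam_eq power2_eq_square algebra_simps)
    moreover have "s * (1 - s) * (b - a)\<^sup>2 > 0" using s al lb by simp
    ultimately show ?thesis by linarith
  qed
  ultimately have "chi g h lam c < (1 - s) * chi g h a c + s * chi g h b c"
    unfolding chi_def by (simp add: lam_eq algebra_simps)
  moreover have "chi g h a c = 0" "chi g h b c = 0"
    using aS bS by (simp_all add: S_def a_def b_def)
  ultimately show "chi g h lam c < 0" by simp
qed

lemma chi_neg_imp_speed_pos:
  assumes "chi g h lam c < 0" and "lam > 0" and "h \<ge> 0" and "deriv g 0 \<ge> 1"
  shows "c > 0"
proof (rule ccontr)
  assume "\<not> c > 0"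
  then have "lam * c \<le> 0" "lam * c * h \<le> 0"
    using assms by (simp_all add: mult_nonneg_nonpos mult_nonpos_nonneg)
  then have "1 \<le> exp (- lam * c * h)" by simp
  then have "deriv g 0 \<le> deriv g 0 * exp (- lam * c * h)"
    using assms(4) by simp
  then have "lam\<^sup>2 - c * lam - 1 + deriv g 0 \<le> chi g h lam c"
    by (simp add: chi_def)
  with assms \<open>lam * c \<le> 0\<close> zero_le_power2[of lam] show False
    by (simp add: mult.commute)
qed

section \<open>The decay estimate\<close>

text \<open>Left of \<open>-R\<close> the comparison weight is \<open>e\<^bsup>\<lambda> z\<^esup>\<close>, right of \<open>R\<close> it is \<open>e\<^bsup>0 z\<^esup> = 1\<close>;
  both agree with \<open>eta lam\<close> there.\<close>

lemma front_upper_bound_decays: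
  fixes w :: "real \<Rightarrow> real \<Rightarrow> real" and g \<phi> :: "real \<Rightarrow> real"
  assumes sol: "classical_sol g h c (c * h) {0<..} w"
    and cont: "continuous_on ({-h..} \<times> UNIV) (\<lambda>(t, z). w t z)"
    and bounded: "bounded ((\<lambda>(t, z). w t z) ` ({-h..} \<times> UNIV))"
    and \<phi>: "profile_eq g h c \<phi>" and \<phi>_pos: "\<And>x. \<phi> x > 0"
    and h: "h \<ge> 0" and c: "c > 0" and lam: "lam > 0" and \<gamma>: "\<gamma> \<ge> 0" and \<delta>: "\<delta> > 0"
    and K0: "K0 \<ge> 0" and super0: "exp_supersolution c h K0 lam \<gamma>"
    and K1: "K1 \<ge> 0" and super1: "exp_supersolution c h K1 0 \<gamma>"
    and slope0: "\<forall>a\<in>{0..\<delta>}. \<forall>p\<in>{0..\<delta>}. g a - g p \<le> K0 * max (a - p) 0"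
    and slope1: "\<forall>a\<in>{\<kappa> - \<delta><..<\<kappa> + \<delta>}. \<forall>p\<in>{\<kappa> - \<delta><..<\<kappa> + \<delta>}. g a - g p \<le> K1 * max (a - p) 0"
    and R: "R > c * h"
    and left: "\<forall>t\<ge>-h. \<forall>z\<le>-R + c * h. 0 \<le> w t z \<and> w t z \<le> \<delta> \<and> 0 \<le> \<phi> z \<and> \<phi> z \<le> \<delta>"
    and right: "\<forall>t\<ge>-h. \<forall>z\<ge>R - c * h. \<bar>w t z - \<kappa>\<bar> < \<delta> \<and> \<bar>\<phi> z - \<kappa>\<bar> < \<delta>"
    and init: "\<forall>s\<in>{-h..0}. \<forall>z. w s z \<le> \<phi> z + \<delta> * eta lam z"
    and mid: "\<forall>t\<ge>0. \<forall>z\<in>{-R - c * h..R + c * h}. w t z \<le> \<phi> z"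
    and t: "t \<ge> 0"
  shows "w t z \<le> \<phi> z + \<delta> * eta lam z * exp (- \<gamma> * t)"
proof -
  obtain B where B: "\<And>s y. s \<ge> -h \<Longrightarrow> \<bar>w s y\<bar> \<le> B"
    using bounded unfolding bounded_real by fastforce
  have bdd: "w s y - \<phi> y \<le> B" if "s \<ge> 0" for s y
    using B[of s y] \<phi>_pos[of y] that h by linarith
  have cont0: "continuous_on ({0..} \<times> UNIV) (\<lambda>(t, z). w t z)"
    by (rule continuous_on_subset[OF cont]) (use h in auto)
  have ch: "c * h \<ge> 0" using c h by simp
  have on_mid: "w s y \<le> \<phi> y" if "s \<ge> 0" "-R - c * h \<le> y" "y \<le> R + c * h" for s y
    using mid that by simp
  have init_exp: "w s y \<le> \<phi> y + \<delta> * exp (\<mu> * y)"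
    if "s \<in> {-h..0}" "eta lam y \<le> exp (\<mu> * y)" for s y \<mu>
  proof -
    have "w s y \<le> \<phi> y + \<delta> * eta lam y" using init that(1) by blast
    moreover have "\<delta> * eta lam y \<le> \<delta> * exp (\<mu> * y)" using that(2) \<delta> by simp
    ultimately show ?thesis by simp
  qed
  consider "z \<le> -R" | "z \<ge> R" | "-R < z" "z < R" by linarith
  then show ?thesis
  proof cases
    case 1
    have "w t z \<le> \<phi> z + \<delta> * exp (lam * z) * exp (- \<gamma> * t)"
    proof (rule comparison_on_closed_set[OF sol cont0 bdd \<phi> super0 \<gamma> K0 h \<delta> closed_atMost])
      show "w s y \<le> \<phi> y + \<delta> * exp (lam * y)" if "s \<in> {-h..0}" for s y
        using that by (intro init_exp) (simp_all add: eta_def)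
      fix s y assume "s \<ge> -h" "y \<in> {..-R}"
      then have "w s (y - c * h) \<in> {0..\<delta>}" "\<phi> (y - c * h) \<in> {0..\<delta>}"
        using left ch by auto
      then show "g (w s (y - c * h)) - g (\<phi> (y - c * h)) \<le> K0 * max (w s (y - c * h) - \<phi> (y - c * h)) 0"
        using slope0 by blast
    qed (use 1 t ch on_mid R in auto)
    moreover have "eta lam z = exp (lam * z)"
      using 1 lam R ch by (simp add: eta_def mult_nonneg_nonpos)
    ultimately show ?thesis by simp
  next
    case 2
    have "w t z \<le> \<phi> z + \<delta> * exp (0 * z) * exp (- \<gamma> * t)"
    proof (rule comparison_on_closed_set[OF sol cont0 bdd \<phi> super1 \<gamma> K1 h \<delta> closed_atLeast])
      show "w s y \<le> \<phi> y + \<delta> * exp (0 * y)" if "s \<in> {-h..0}" for s y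
        using that by (intro init_exp) (simp_all add: eta_def)
      fix s y assume "s \<ge> -h" "y \<in> {R..}"
      then have "w s (y - c * h) \<in> {\<kappa> - \<delta><..<\<kappa> + \<delta>}" "\<phi> (y - c * h) \<in> {\<kappa> - \<delta><..<\<kappa> + \<delta>}"
        using right[rule_format, of s "y - c * h"] by (auto simp: abs_less_iff)
      then show "g (w s (y - c * h)) - g (\<phi> (y - c * h)) \<le> K1 * max (w s (y - c * h) - \<phi> (y - c * h)) 0"
        using slope1 by blast
    qed (use 2 t ch on_mid R in auto)
    moreover have "eta lam z = 1"
      using 2 lam R ch by (simp add: eta_def)
    ultimately show ?thesis by simp
  next
    case 3
    then have "w t z \<le> \<phi> z" using on_mid[OF t] ch by simp
    moreover have "0 \<le> \<delta> * eta lam z * exp (- \<gamma> * t)" using \<delta> by (simp add: eta_def)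
    ultimately show ?thesis by simp
  qed
qed

theorem lemma2:
  fixes g :: "real \<Rightarrow> real" and \<kappa> h c lam :: real and \<phi> :: "real \<Rightarrow> real"
  assumes H: "hypH g \<kappa>"
    and mono: "mono_on {0..} g"
    and h: "h \<ge> 0"
    and c: "c = c_star g \<kappa> h" "c > c_sharp g h"
    and front: "wavefront g \<kappa> h c \<phi>"
    and lam: "lambda1 g h c < lam" "lam < lambda2 g h c"
  shows "\<exists>\<gamma>>0. \<exists>\<delta>>0. \<forall>(w :: real \<Rightarrow> real \<Rightarrow> real) R.
     ( classical_sol g h c (c * h) {0<..} w
     \<and> continuous_on ({-h..} \<times> UNIV) (\<lambda>(t, z). w t z)
     \<and> bounded ((\<lambda>(t, z). w t z) ` ({-h..} \<times> UNIV))
     \<and> (\<forall>s\<in>{-h..0}. \<forall>z. 0 \<le> w s z \<and> w s z \<le> \<kappa>)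
     \<and> (\<forall>z0. \<exists>r>0. \<exists>K \<alpha>. 0 < \<alpha> \<and> \<alpha> \<le> 1 \<and>
           (\<forall>s\<in>{-h..0}. \<forall>y\<in>ball z0 r. \<forall>z\<in>ball z0 r.
               \<bar>w s y - w s z\<bar> \<le> K * \<bar>y - z\<bar> powr \<alpha>))
     \<and> R > c * h
     \<and> (\<forall>t\<ge>-h. \<forall>z\<le>-R + c * h. 0 \<le> w t z \<and> w t z \<le> \<delta> \<and> 0 \<le> \<phi> z \<and> \<phi> z \<le> \<delta>)
     \<and> (\<forall>t\<ge>-h. \<forall>z\<ge>R - c * h. \<bar>w t z - \<kappa>\<bar> < \<delta> \<and> \<bar>\<phi> z - \<kappa>\<bar> < \<delta>)
     \<and> (\<forall>s\<in>{-h..0}. \<forall>z. w s z \<le> \<phi> z + \<delta> * eta lam z)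
     \<and> (\<forall>t\<ge>0. \<forall>z\<in>{-R - c * h..R + c * h}. w t z \<le> \<phi> z)
     \<longrightarrow> (\<forall>t\<ge>0. \<forall>z. w t z \<le> \<phi> z + \<delta> * eta lam z * exp (- \<gamma> * t)))"
proof -
  have \<phi>: "profile_eq g h c \<phi>" using front by (rule wavefront_profile_eq)
  have \<phi>_pos: "\<And>x. \<phi> x > 0" using front by (simp add: wavefront_def)
  have d0: "deriv g 0 > 1" and d\<kappa>: "deriv g \<kappa> < 1" using H by (simp_all add: hypH_def)
  have d\<kappa>_nonneg: "deriv g \<kappa> \<ge> 0" using H mono by (rule hypH_deriv_kappa_nonneg)
  have lam_pos: "lam > 0" and chi_lam: "chi g h lam c < 0"
    using chi_neg_between_zeros[OF lam] d0 by simp_all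
  have c_pos: "c > 0" using chi_neg_imp_speed_pos[OF chi_lam lam_pos h] d0 by simp
  have "\<forall>\<^sub>F \<rho> in at_right 0. 0 < \<rho> \<and> exp_supersolution c h (deriv g 0 + \<rho>) lam \<rho>
      \<and> exp_supersolution c h (deriv g \<kappa> + \<rho>) 0 \<rho>"
    using chi_lam d\<kappa>
    by (intro eventually_conj eventually_at_right_less exp_supersolution_eventually) (simp_all add: chi_def)
  then obtain \<gamma> where \<gamma>: "\<gamma> > 0" and super0: "exp_supersolution c h (deriv g 0 + \<gamma>) lam \<gamma>"
    and super1: "exp_supersolution c h (deriv g \<kappa> + \<gamma>) 0 \<gamma>"
    using eventually_happens'[of "at_right (0::real)"] by auto
  obtain \<delta> where \<delta>: "\<delta> > 0" and slope0: "\<forall>a\<in>{0..\<delta>}. \<forall>p\<in>{0..\<delta>}. g a - g p \<le> (deriv g 0 + \<gamma>) * max (a - p) 0"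
    and slope1: "\<forall>a\<in>{\<kappa> - \<delta><..<\<kappa> + \<delta>}. \<forall>p\<in>{\<kappa> - \<delta><..<\<kappa> + \<delta>}.
      g a - g p \<le> (deriv g \<kappa> + \<gamma>) * max (a - p) 0"
    using hypH_local_slopes[OF H mono \<gamma>] by blast
  have K0: "deriv g 0 + \<gamma> \<ge> 0" and K1: "deriv g \<kappa> + \<gamma> \<ge> 0" using d0 d\<kappa>_nonneg \<gamma> by simp_all
  show ?thesis
  proof (rule exI[of _ \<gamma>], intro conjI \<gamma>, rule exI[of _ \<delta>], intro conjI \<delta> allI impI, elim conjE)
  qed (rule front_upper_bound_decays[OF _ _ _ \<phi> \<phi>_pos h c_pos lam_pos less_imp_le[OF \<gamma>] \<delta>
        K0 super0 K1 super1 slope0 slope1]; assumption)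
qed

end
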